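(* Let $r=\langle L\leftarrow K\rightarrow R,\ c\rangle$ be a conditional rule schema, let $G$ be a host graph in $\mathcal{G}(\mathcal{L})$, and let $g\colon L\to G$ be a premorphism. Then there exists at most one assignment $\alpha$ such that $g$ is a graph morphism $L^{g,\alpha}\to G$, i.e. such that $g$ preserves sources and targets and $l_G(g_V(v))=l_L(v)^{g,\alpha}$ for every node $v$ of $L$ and $m_G(g_E(e))=m_L(e)^{g,\alpha}$ for every edge $e$ of $L$.
   Context: Graphs. A graph over a label set $\mathcal{C}$ is $G=(V_G,E_G,s_G,t_G,l_G,m_G)$ with finite node set $V_G$ and edge set $E_G$, source and target maps $s_G,t_G\colon E_G\to V_G$, a partial node labelling $l_G\colon V_G\to\mathcal{C}$ and a total edge labelling $m_G\colon E_G\to\mathcal{C}$. $\mathcal{G}(\mathcal{C})$ denotes totally labelled graphs. A graph morphism $g\colon G\to H$ is a pair of maps $g_V\colon V_G\to V_H$, $g_E\colon E_G\to E_H$ preserving sources, targets, edge labels, and the labels of all labelled nodes. Host labels. Let $\mathrm{Char}$ be a fixed set of characters, $\mathbb{B}=\{\mathrm{true},\mathrm{false}\}$, and $\mathcal{L}=(\mathbb{Z}\cup\mathrm{Char}^* )^*\times\mathbb{B}$: a label is a finite sequence of integers and character strings (the empty sequence is allowed and differs from the empty string) paired with a boolean mark. Host graphs are graphs in $\mathcal{G}(\mathcal{L})$. Syntactic labels. Given a finite set Node of node identifiers and pairwise disjoint finite sets IVariable, SVariable, AVariable, LVariable of variables of types int, string, atom, list, expressions are generated by: Integer ::= Digit{Digit}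 | IVariable | $-$Integer | Integer ArithOp Integer | indeg(Node) | outdeg(Node); ArithOp ::= + | $-$ | $*$ | /; String ::= "{Char}" | SVariable | String . String (string concatenation); Atom ::= Integer | String | AVariable; List ::= empty | Atom | LVariable | List : List (list concatenation); Label ::= List Mark; Mark ::= true | false. An expression $e\in$ List is simple if (1) it contains no arithmetic operators, (2) it contains at most one occurrence of a list variable, and (3) each occurrence of a string expression in $e$ contains at most one occurrence of a string variable. Conditions: Condition ::= Type(List) | List (= | !=) List | Integer RelOp Integer | edge(Node, Node [, List]) | not Condition | Condition (and | or) Condition, with Type ::= int | string | atom and RelOp ::= > | >= | < | <=. Conditional rule schema. A rule schema $\langle L\leftarrow K\rightarrow R\rangle$ consists of inclusions $K\to L$, $K\to R$ where $L,R$ are totally labelled graphs over Label and $K$ consists of unlabelled nodes only; all list expressions in $L$ are simple and every variable occurring in $R$ occurs in $L$. A conditional rule schema $\langle L\leftarrow K\rightarrow R, c\rangle$ adds a condition $c$ all of whose variables occur in $L$. The variable sets above are those occurring in the rule schema; Node is the set of node identifiers of $L$ (equal to that of $R$). Premorphism: for $L$ labelled over Label and $G\in\mathcal{G}(\mathcal{L})$, a pair of maps $g_V\colon V_L\to V_G$, $g_E\colon E_L\to E_G$ preserving sources and targets (labels ignored). Assignment: $\alpha=(\alpha_I,\alpha_S,\alpha_A,\alpha_L)$ with $\alpha_I\colon\mathrm{IVariable}\to\mathbb{Z}$, $\alpha_S\colon\mathrm{SVariable}\to\mathrm{Char}^*$, $\alpha_A\colon\mathrm{AVariable}\to\mathbb{Z}\cup\mathrm{Char}^*$,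 $\alpha_L\colon\mathrm{LVariable}\to(\mathbb{Z}\cup\mathrm{Char}^* )^*$. Sequences of length one are identified with their single element. Evaluation $e^{g,\alpha}\in(\mathbb{Z}\cup\mathrm{Char}^* )^*$: empty $\mapsto$ empty sequence; a digit string or quoted character string $\mapsto$ the integer or string it denotes; a variable $x\mapsto\alpha(x)$; $-e_1\mapsto -e_1^{g,\alpha}$; $e_1\oplus e_2\mapsto e_1^{g,\alpha}\oplus_{\mathbb{Z}}e_2^{g,\alpha}$; indeg$(n)$/outdeg$(n)\mapsto$ the indegree/outdegree of $g_V(n)$ in $G$; $e_1.e_2$ and $e_1{:}e_2\mapsto$ concatenation of the values. For a label $l=e\,m$, $l^{g,\alpha}=(e^{g,\alpha},\mathrm{true})$ if $m=$true and $(e^{g,\alpha},\mathrm{false})$ otherwise. $L^{g,\alpha}$ is obtained from $L$ by replacing each label $l$ by $l^{g,\alpha}$. *)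

theory Defs
  imports Main
begin

record ('v, 'e, 'l) graph =
  nodes :: "'v set"
  edges :: "'e set"
  gsrc  :: "'e \<Rightarrow> 'v"
  gtgt  :: "'e \<Rightarrow> 'v"
  nlab  :: "'v \<Rightarrow> 'l option"
  elab  :: "'e \<Rightarrow> 'l"

definition wf_graph :: "('v, 'e, 'l) graph \<Rightarrow> bool" where
  "wf_graph G \<longleftrightarrow> finite (nodes G) \<and> finite (edges G) \<and>
     (\<forall>e\<in>edges G. gsrc G e \<in> nodes G \<and> gtgt G e \<in> nodes G)"

definition totally_labelled :: "('v, 'e, 'l) graph \<Rightarrow> bool" where
  "totally_labelled G \<longleftrightarrow> (\<forall>v\<in>nodes G. nlab G v \<noteq> None)"

definition graph_morphism ::
  "('v, 'e, 'l) graph \<Rightarrow> ('w, 'f, 'l) graph \<Rightarrow> ('v \<Rightarrow> 'w) \<Rightarrow> ('e \<Rightarrow> 'f) \<Rightarrow> bool" where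
  "graph_morphism A B fV fE \<longleftrightarrow>
     (\<forall>v\<in>nodes A. fV v \<in> nodes B) \<and>
     (\<forall>e\<in>edges A. fE e \<in> edges B \<and> gsrc B (fE e) = fV (gsrc A e) \<and>
                    gtgt B (fE e) = fV (gtgt A e) \<and> elab B (fE e) = elab A e) \<and>
     (\<forall>v\<in>nodes A. \<forall>l. nlab A v = Some l \<longrightarrow> nlab B (fV v) = Some l)"

definition premorphism ::
  "('v, 'e, 'l) graph \<Rightarrow> ('w, 'f, 'k) graph \<Rightarrow> ('v \<Rightarrow> 'w) \<Rightarrow> ('e \<Rightarrow> 'f) \<Rightarrow> bool" where
  "premorphism A B fV fE \<longleftrightarrow>
     (\<forall>v\<in>nodes A. fV v \<in> nodes B) \<and>
     (\<forall>e\<in>edges A. fE e \<in> edges B \<and> gsrc B (fE e) = fV (gsrc A e) \<and>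
                    gtgt B (fE e) = fV (gtgt A e))"

definition indeg :: "('v, 'e, 'l) graph \<Rightarrow> 'v \<Rightarrow> int" where
  "indeg G x = int (card {e \<in> edges G. gtgt G e = x})"

definition outdeg :: "('v, 'e, 'l) graph \<Rightarrow> 'v \<Rightarrow> int" where
  "outdeg G x = int (card {e \<in> edges G. gsrc G e = x})"

text \<open>The character set Char is the type 'ch; strings are 'ch lists.
 An atom value is an integer or a string.\<close>
datatype 'ch hatom = HInt int | HStr "'ch list"

type_synonym 'ch hlabel = "'ch hatom list \<times> bool"

definition host_graph :: "('v, 'e, 'ch hlabel) graph \<Rightarrow> bool" where
  "host_graph G \<longleftrightarrow> wf_graph G \<and> totally_labelled G"

text \<open>'n: node identifiers, 'v: variable names. A variable is identified by its
 name together with its type, so the four variable sets are pairwise disjoint.\<close>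
datatype arithop = Plus | Minus | Times | Div

datatype ('n, 'v) iexp =
    INum nat | IVar 'v | INeg "('n, 'v) iexp"
  | IOp arithop "('n, 'v) iexp" "('n, 'v) iexp"
  | Indeg 'n | Outdeg 'n

datatype ('v, 'ch) sexp = SLit "'ch list" | SVar 'v | SCat "('v, 'ch) sexp" "('v, 'ch) sexp"

datatype ('n, 'v, 'ch) aexp = AInt "('n, 'v) iexp" | AStr "('v, 'ch) sexp" | AVar 'v

datatype ('n, 'v, 'ch) lexp =
    LEmpty | LAtom "('n, 'v, 'ch) aexp" | LVar 'v
  | LCat "('n, 'v, 'ch) lexp" "('n, 'v, 'ch) lexp"

type_synonym ('n, 'v, 'ch) slabel = "('n, 'v, 'ch) lexp \<times> bool"

datatype ctype = TInt | TString | TAtom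
datatype relop = Gt | Ge | Lt | Le

datatype ('n, 'v, 'ch) cond =
    CType ctype "('n, 'v, 'ch) lexp"
  | CEq "('n, 'v, 'ch) lexp" "('n, 'v, 'ch) lexp"
  | CNeq "('n, 'v, 'ch) lexp" "('n, 'v, 'ch) lexp"
  | CRel relop "('n, 'v) iexp" "('n, 'v) iexp"
  | CEdge 'n 'n "('n, 'v, 'ch) lexp option"
  | CNot "('n, 'v, 'ch) cond"
  | CAnd "('n, 'v, 'ch) cond" "('n, 'v, 'ch) cond"
  | COr "('n, 'v, 'ch) cond" "('n, 'v, 'ch) cond"

datatype 'v tvar = VI 'v | VS 'v | VA 'v | VL 'v

fun ivars :: "('n, 'v) iexp \<Rightarrow> 'v tvar set" where
  "ivars (INum k) = {}"
| "ivars (IVar x) = {VI x}"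
| "ivars (INeg i) = ivars i"
| "ivars (IOp _ i j) = ivars i \<union> ivars j"
| "ivars (Indeg _) = {}"
| "ivars (Outdeg _) = {}"

fun svars :: "('v, 'ch) sexp \<Rightarrow> 'v tvar set" where
  "svars (SLit _) = {}"
| "svars (SVar x) = {VS x}"
| "svars (SCat s t) = svars s \<union> svars t"

fun avars :: "('n, 'v, 'ch) aexp \<Rightarrow> 'v tvar set" where
  "avars (AInt i) = ivars i"
| "avars (AStr s) = svars s"
| "avars (AVar x) = {VA x}"

fun lvars :: "('n, 'v, 'ch) lexp \<Rightarrow> 'v tvar set" where
  "lvars LEmpty = {}"
| "lvars (LAtom a) = avars a"
| "lvars (LVar x) = {VL x}"
| "lvars (LCat l m) = lvars l \<union> lvars m"

fun cvars :: "('n, 'v, 'ch) cond \<Rightarrow> 'v tvar set" where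
  "cvars (CType _ l) = lvars l"
| "cvars (CEq l m) = lvars l \<union> lvars m"
| "cvars (CNeq l m) = lvars l \<union> lvars m"
| "cvars (CRel _ i j) = ivars i \<union> ivars j"
| "cvars (CEdge _ _ lo) = (case lo of None \<Rightarrow> {} | Some l \<Rightarrow> lvars l)"
| "cvars (CNot c) = cvars c"
| "cvars (CAnd c d) = cvars c \<union> cvars d"
| "cvars (COr c d) = cvars c \<union> cvars d"

definition graph_vars :: "('x, 'e, ('n, 'v, 'ch) slabel) graph \<Rightarrow> 'v tvar set" where
  "graph_vars G =
     (\<Union>v\<in>nodes G. case nlab G v of None \<Rightarrow> {} | Some l \<Rightarrow> lvars (fst l)) \<union>
     (\<Union>e\<in>edges G. lvars (fst (elab G e)))"

fun inodes :: "('n, 'v) iexp \<Rightarrow> 'n set" where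
  "inodes (INum k) = {}"
| "inodes (IVar x) = {}"
| "inodes (INeg i) = inodes i"
| "inodes (IOp _ i j) = inodes i \<union> inodes j"
| "inodes (Indeg n) = {n}"
| "inodes (Outdeg n) = {n}"

fun anodes :: "('n, 'v, 'ch) aexp \<Rightarrow> 'n set" where
  "anodes (AInt i) = inodes i"
| "anodes (AStr s) = {}"
| "anodes (AVar x) = {}"

fun lnodes :: "('n, 'v, 'ch) lexp \<Rightarrow> 'n set" where
  "lnodes LEmpty = {}"
| "lnodes (LAtom a) = anodes a"
| "lnodes (LVar x) = {}"
| "lnodes (LCat l m) = lnodes l \<union> lnodes m"

fun cnodes :: "('n, 'v, 'ch) cond \<Rightarrow> 'n set" where
  "cnodes (CType _ l) = lnodes l"
| "cnodes (CEq l m) = lnodes l \<union> lnodes m"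
| "cnodes (CNeq l m) = lnodes l \<union> lnodes m"
| "cnodes (CRel _ i j) = inodes i \<union> inodes j"
| "cnodes (CEdge n m lo) = {n, m} \<union> (case lo of None \<Rightarrow> {} | Some l \<Rightarrow> lnodes l)"
| "cnodes (CNot c) = cnodes c"
| "cnodes (CAnd c d) = cnodes c \<union> cnodes d"
| "cnodes (COr c d) = cnodes c \<union> cnodes d"

definition graph_node_refs :: "('x, 'e, ('n, 'v, 'ch) slabel) graph \<Rightarrow> 'n set" where
  "graph_node_refs G =
     (\<Union>v\<in>nodes G. case nlab G v of None \<Rightarrow> {} | Some l \<Rightarrow> lnodes (fst l)) \<union>
     (\<Union>e\<in>edges G. lnodes (fst (elab G e)))"

fun i_has_arith :: "('n, 'v) iexp \<Rightarrow> bool" where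
  "i_has_arith (INum k) = False"
| "i_has_arith (IVar x) = False"
| "i_has_arith (INeg i) = i_has_arith i"
| "i_has_arith (IOp _ i j) = True"
| "i_has_arith (Indeg _) = False"
| "i_has_arith (Outdeg _) = False"

fun a_has_arith :: "('n, 'v, 'ch) aexp \<Rightarrow> bool" where
  "a_has_arith (AInt i) = i_has_arith i"
| "a_has_arith (AStr s) = False"
| "a_has_arith (AVar x) = False"

fun l_has_arith :: "('n, 'v, 'ch) lexp \<Rightarrow> bool" where
  "l_has_arith LEmpty = False"
| "l_has_arith (LAtom a) = a_has_arith a"
| "l_has_arith (LVar x) = False"
| "l_has_arith (LCat l m) = (l_has_arith l \<or> l_has_arith m)"

fun lvar_occs :: "('n, 'v, 'ch) lexp \<Rightarrow> nat" where
  "lvar_occs LEmpty = 0"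
| "lvar_occs (LAtom a) = 0"
| "lvar_occs (LVar x) = 1"
| "lvar_occs (LCat l m) = lvar_occs l + lvar_occs m"

fun svar_occs :: "('v, 'ch) sexp \<Rightarrow> nat" where
  "svar_occs (SLit _) = 0"
| "svar_occs (SVar x) = 1"
| "svar_occs (SCat s t) = svar_occs s + svar_occs t"

text \<open>Every string expression occurring in the list expression contains at most one
 occurrence of a string variable. (String expressions only occur as atoms; checking
 maximal ones suffices since sub-expressions have no more occurrences.)\<close>
fun strings_ok :: "('n, 'v, 'ch) lexp \<Rightarrow> bool" where
  "strings_ok LEmpty = True"
| "strings_ok (LAtom (AStr s)) = (svar_occs s \<le> 1)"
| "strings_ok (LAtom _) = True"
| "strings_ok (LVar x) = True"
| "strings_ok (LCat l m) = (strings_ok l \<and> strings_ok m)"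

definition simple :: "('n, 'v, 'ch) lexp \<Rightarrow> bool" where
  "simple e \<longleftrightarrow> \<not> l_has_arith e \<and> lvar_occs e \<le> 1 \<and> strings_ok e"

record ('n, 'e, 'v, 'ch) rule_schema =
  rL :: "('n, 'e, ('n, 'v, 'ch) slabel) graph"
  rK :: "('n, 'e, ('n, 'v, 'ch) slabel) graph"
  rR :: "('n, 'e, ('n, 'v, 'ch) slabel) graph"
  rc :: "('n, 'v, 'ch) cond"

definition inclusion :: "('v, 'e, 'l) graph \<Rightarrow> ('v, 'e, 'l) graph \<Rightarrow> bool" where
  "inclusion K L \<longleftrightarrow> nodes K \<subseteq> nodes L \<and> edges K \<subseteq> edges L \<and>
     (\<forall>e\<in>edges K. gsrc L e = gsrc K e \<and> gtgt L e = gtgt K e)"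

definition rule_vars :: "('n, 'e, 'v, 'ch) rule_schema \<Rightarrow> 'v tvar set" where
  "rule_vars r = graph_vars (rL r) \<union> graph_vars (rK r) \<union> graph_vars (rR r) \<union> cvars (rc r)"

definition cond_rule_schema :: "('n, 'e, 'v, 'ch) rule_schema \<Rightarrow> bool" where
  "cond_rule_schema r \<longleftrightarrow>
     wf_graph (rL r) \<and> wf_graph (rK r) \<and> wf_graph (rR r) \<and>
     inclusion (rK r) (rL r) \<and> inclusion (rK r) (rR r) \<and>
     totally_labelled (rL r) \<and> totally_labelled (rR r) \<and>
     edges (rK r) = {} \<and> (\<forall>v\<in>nodes (rK r). nlab (rK r) v = None) \<and>
     (\<forall>v\<in>nodes (rL r). \<forall>l. nlab (rL r) v = Some l \<longrightarrow> simple (fst l)) \<and>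
     (\<forall>e\<in>edges (rL r). simple (fst (elab (rL r) e))) \<and>
     graph_vars (rR r) \<subseteq> graph_vars (rL r) \<and>
     cvars (rc r) \<subseteq> graph_vars (rL r) \<and>
     graph_node_refs (rL r) \<subseteq> nodes (rL r) \<and>
     graph_node_refs (rR r) \<subseteq> nodes (rL r) \<and>
     cnodes (rc r) \<subseteq> nodes (rL r)"

record ('v, 'ch) assignment =
  asgI :: "'v \<Rightarrow> int"
  asgS :: "'v \<Rightarrow> 'ch list"
  asgA :: "'v \<Rightarrow> 'ch hatom"
  asgL :: "'v \<Rightarrow> 'ch hatom list"

definition agree_on :: "'v tvar set \<Rightarrow> ('v, 'ch) assignment \<Rightarrow> ('v, 'ch) assignment \<Rightarrow> bool" where
  "agree_on X \<alpha> \<beta> \<longleftrightarrow>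
     (\<forall>x. VI x \<in> X \<longrightarrow> asgI \<alpha> x = asgI \<beta> x) \<and>
     (\<forall>x. VS x \<in> X \<longrightarrow> asgS \<alpha> x = asgS \<beta> x) \<and>
     (\<forall>x. VA x \<in> X \<longrightarrow> asgA \<alpha> x = asgA \<beta> x) \<and>
     (\<forall>x. VL x \<in> X \<longrightarrow> asgL \<alpha> x = asgL \<beta> x)"

fun arith :: "arithop \<Rightarrow> int \<Rightarrow> int \<Rightarrow> int" where
  "arith Plus a b = a + b"
| "arith Minus a b = a - b"
| "arith Times a b = a * b"
| "arith Div a b = a div b"

fun ieval :: "('w, 'f, 'l) graph \<Rightarrow> ('n \<Rightarrow> 'w) \<Rightarrow> ('v, 'ch) assignment \<Rightarrow> ('n, 'v) iexp \<Rightarrow> int" where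
  "ieval G gV \<alpha> (INum k) = int k"
| "ieval G gV \<alpha> (IVar x) = asgI \<alpha> x"
| "ieval G gV \<alpha> (INeg i) = - ieval G gV \<alpha> i"
| "ieval G gV \<alpha> (IOp op i j) = arith op (ieval G gV \<alpha> i) (ieval G gV \<alpha> j)"
| "ieval G gV \<alpha> (Indeg n) = indeg G (gV n)"
| "ieval G gV \<alpha> (Outdeg n) = outdeg G (gV n)"

fun seval :: "('v, 'ch) assignment \<Rightarrow> ('v, 'ch) sexp \<Rightarrow> 'ch list" where
  "seval \<alpha> (SLit s) = s"
| "seval \<alpha> (SVar x) = asgS \<alpha> x"
| "seval \<alpha> (SCat s t) = seval \<alpha> s @ seval \<alpha> t"

fun aeval :: "('w, 'f, 'l) graph \<Rightarrow> ('n \<Rightarrow> 'w) \<Rightarrow> ('v, 'ch) assignment \<Rightarrow> ('n, 'v, 'ch) aexp \<Rightarrow> 'ch hatom" where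
  "aeval G gV \<alpha> (AInt i) = HInt (ieval G gV \<alpha> i)"
| "aeval G gV \<alpha> (AStr s) = HStr (seval \<alpha> s)"
| "aeval G gV \<alpha> (AVar x) = asgA \<alpha> x"

text \<open>Sequences of length one are identified with their single element.\<close>
fun leval :: "('w, 'f, 'l) graph \<Rightarrow> ('n \<Rightarrow> 'w) \<Rightarrow> ('v, 'ch) assignment \<Rightarrow> ('n, 'v, 'ch) lexp \<Rightarrow> 'ch hatom list" where
  "leval G gV \<alpha> LEmpty = []"
| "leval G gV \<alpha> (LAtom a) = [aeval G gV \<alpha> a]"
| "leval G gV \<alpha> (LVar x) = asgL \<alpha> x"
| "leval G gV \<alpha> (LCat l m) = leval G gV \<alpha> l @ leval G gV \<alpha> m"

definition label_eval :: "('w, 'f, 'l) graph \<Rightarrow> ('n \<Rightarrow> 'w) \<Rightarrow> ('v, 'ch) assignment \<Rightarrow> ('n, 'v, 'ch) slabel \<Rightarrow> 'ch hlabel" where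
  "label_eval G gV \<alpha> l = (leval G gV \<alpha> (fst l), snd l)"

definition inst_graph ::
  "('x, 'e, ('n, 'v, 'ch) slabel) graph \<Rightarrow> ('w, 'f, 'l) graph \<Rightarrow> ('n \<Rightarrow> 'w) \<Rightarrow> ('v, 'ch) assignment
     \<Rightarrow> ('x, 'e, 'ch hlabel) graph" where
  "inst_graph L G gV \<alpha> =
     \<lparr> nodes = nodes L, edges = edges L, gsrc = gsrc L, gtgt = gtgt L,
       nlab = (\<lambda>v. map_option (label_eval G gV \<alpha>) (nlab L v)),
       elab = (\<lambda>e. label_eval G gV \<alpha> (elab L e)) \<rparr>"

end

theory Submission
  imports Defs
begin

(* If g is a morphism from L^{g,alpha} and from L^{g,beta} to G, then every label
   of L evaluates to the same host label under alpha and beta.  All labels of L are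
   simple list expressions, and evaluation of a simple expression is injective in
   the values of its variables: there is no arithmetic to hide an integer variable,
   and in every concatenation at most one side contains a list (resp. string)
   variable, so the other side has an assignment-independent length and the
   equation of the two concatenations splits into equations of the parts. *)

lemma agree_on_empty [simp]: "agree_on {} \<alpha> \<beta>"
  by (simp add: agree_on_def)

lemma agree_on_Un [simp]:
  "agree_on (X \<union> Y) \<alpha> \<beta> \<longleftrightarrow> agree_on X \<alpha> \<beta> \<and> agree_on Y \<alpha> \<beta>"
  by (auto simp: agree_on_def)

lemma agree_on_UN [simp]:
  "agree_on (\<Union>i\<in>I. X i) \<alpha> \<beta> \<longleftrightarrow> (\<forall>i\<in>I. agree_on (X i) \<alpha> \<beta>)"
  by (auto simp: agree_on_def)

lemma agree_on_subset: "agree_on Y \<alpha> \<beta> \<Longrightarrow> X \<subseteq> Y \<Longrightarrow> agree_on X \<alpha> \<beta>"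
  by (auto simp: agree_on_def)

text \<open>Without arithmetic operators an integer expression is a possibly negated
  literal, variable or degree, so its value determines the value of its variable.\<close>
lemma ivars_determined:
  assumes "\<not> i_has_arith i" and "ieval G gV \<alpha> i = ieval G gV \<beta> i"
  shows "agree_on (ivars i) \<alpha> \<beta>"
  using assms by (induction i) (auto simp: agree_on_def)

lemma seval_constant: "svar_occs s = 0 \<Longrightarrow> seval \<alpha> s = seval \<beta> s"
  by (induction s) auto

lemma svars_determined:
  assumes "svar_occs s \<le> 1" and "seval \<alpha> s = seval \<beta> s"
  shows "agree_on (svars s) \<alpha> \<beta>"
  using assms
proof (induction s)
  case (SCat s t)
  have "svar_occs s = 0 \<or> svar_occs t = 0"
    using SCat.prems(1) by simp arith
  then have "length (seval \<alpha> s) = length (seval \<beta> s) \<or>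
             length (seval \<alpha> t) = length (seval \<beta> t)"
    using seval_constant by metis
  then have "seval \<alpha> s = seval \<beta> s \<and> seval \<alpha> t = seval \<beta> t"
    using SCat.prems(2) by (simp add: append_eq_append_conv)
  with SCat show ?case by simp
qed (auto simp: agree_on_def)

lemma avars_determined:
  assumes "\<not> a_has_arith a" and "strings_ok (LAtom a)"
    and "aeval G gV \<alpha> a = aeval G gV \<beta> a"
  shows "agree_on (avars a) \<alpha> \<beta>"
  using assms
proof (cases a)
  case (AInt i)
  with assms show ?thesis by (simp add: ivars_determined)
next
  case (AStr s)
  with assms show ?thesis by (simp add: svars_determined)
qed (simp_all add: agree_on_def)

lemma leval_length_constant:
  "lvar_occs l = 0 \<Longrightarrow> length (leval G gV \<alpha> l) = length (leval G gV \<beta> l)"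
  by (induction l) auto

lemma lvars_determined:
  assumes "\<not> l_has_arith l" and "lvar_occs l \<le> 1" and "strings_ok l"
    and "leval G gV \<alpha> l = leval G gV \<beta> l"
  shows "agree_on (lvars l) \<alpha> \<beta>"
  using assms
proof (induction l)
  case (LAtom a)
  then show ?case by (simp add: avars_determined)
next
  case (LCat l m)
  have "lvar_occs l = 0 \<or> lvar_occs m = 0"
    using LCat.prems(2) by simp arith
  then have "length (leval G gV \<alpha> l) = length (leval G gV \<beta> l) \<or>
             length (leval G gV \<alpha> m) = length (leval G gV \<beta> m)"
    using leval_length_constant by metis
  then have "leval G gV \<alpha> l = leval G gV \<beta> l \<and> leval G gV \<alpha> m = leval G gV \<beta> m"
    using LCat.prems(4) by (simp add: append_eq_append_conv)
  with LCat show ?case by simp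
qed (auto simp: agree_on_def)

lemma simple_label_determined:
  assumes "simple (fst l)" and "label_eval G gV \<alpha> l = label_eval G gV \<beta> l"
  shows "agree_on (lvars (fst l)) \<alpha> \<beta>"
  using assms by (auto simp: simple_def label_eval_def intro: lvars_determined)

lemma inst_morphism_node_label:
  assumes "graph_morphism (inst_graph L G gV \<alpha>) G gV gE"
    and "v \<in> nodes L" and "nlab L v = Some l"
  shows "nlab G (gV v) = Some (label_eval G gV \<alpha> l)"
proof -
  have "nlab (inst_graph L G gV \<alpha>) v = Some (label_eval G gV \<alpha> l)"
    using assms(3) by (simp add: inst_graph_def)
  moreover have "v \<in> nodes (inst_graph L G gV \<alpha>)"
    using assms(2) by (simp add: inst_graph_def)
  ultimately show ?thesis
    using assms(1) unfolding graph_morphism_def by blast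
qed

lemma inst_morphism_edge_label:
  assumes "graph_morphism (inst_graph L G gV \<alpha>) G gV gE" and "e \<in> edges L"
  shows "elab G (gE e) = label_eval G gV \<alpha> (elab L e)"
  using assms by (simp add: graph_morphism_def inst_graph_def)

lemma inst_morphisms_agree:
  assumes simple_nodes: "\<forall>v\<in>nodes L. \<forall>l. nlab L v = Some l \<longrightarrow> simple (fst l)"
    and simple_edges: "\<forall>e\<in>edges L. simple (fst (elab L e))"
    and mor_\<alpha>: "graph_morphism (inst_graph L G gV \<alpha>) G gV gE"
    and mor_\<beta>: "graph_morphism (inst_graph L G gV \<beta>) G gV gE"
  shows "agree_on (graph_vars L) \<alpha> \<beta>"
proof -
  have nodes_agree: "agree_on (lvars (fst l)) \<alpha> \<beta>"
    if "v \<in> nodes L" and "nlab L v = Some l" for v l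
  proof (rule simple_label_determined)
    show "simple (fst l)" using simple_nodes that by blast
    show "label_eval G gV \<alpha> l = label_eval G gV \<beta> l"
      using inst_morphism_node_label[OF mor_\<alpha> that] inst_morphism_node_label[OF mor_\<beta> that]
      by simp
  qed
  have edges_agree: "agree_on (lvars (fst (elab L e))) \<alpha> \<beta>" if "e \<in> edges L" for e
  proof (rule simple_label_determined)
    show "simple (fst (elab L e))" using simple_edges that by blast
    show "label_eval G gV \<alpha> (elab L e) = label_eval G gV \<beta> (elab L e)"
      using inst_morphism_edge_label[OF mor_\<alpha> that] inst_morphism_edge_label[OF mor_\<beta> that]
      by simp
  qed
  show ?thesis
    using nodes_agree edges_agree by (auto simp: graph_vars_def split: option.split)
qed

text \<open>K consists of unlabelled nodes only, and R and the condition use only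
  variables of L; hence L carries all variables of the schema.\<close>
lemma rule_vars_in_left:
  assumes "cond_rule_schema r"
  shows "rule_vars r \<subseteq> graph_vars (rL r)"
proof -
  have "graph_vars (rK r) = {}"
    using assms by (auto simp: cond_rule_schema_def graph_vars_def)
  with assms show ?thesis
    by (auto simp: cond_rule_schema_def rule_vars_def)
qed

theorem mainTheorem1:
  fixes r :: "('n, 'e, 'v, 'ch) rule_schema"
    and G :: "('w, 'f, 'ch hlabel) graph"
    and gV :: "'n \<Rightarrow> 'w" and gE :: "'e \<Rightarrow> 'f"
    and \<alpha> \<beta> :: "('v, 'ch) assignment"
  assumes "cond_rule_schema r"
    and "host_graph G"
    and "premorphism (rL r) G gV gE"
    and "graph_morphism (inst_graph (rL r) G gV \<alpha>) G gV gE"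
    and "graph_morphism (inst_graph (rL r) G gV \<beta>) G gV gE"
  shows "agree_on (rule_vars r) \<alpha> \<beta>"
proof -
  have "agree_on (graph_vars (rL r)) \<alpha> \<beta>"
  proof (rule inst_morphisms_agree)
    show "\<forall>v\<in>nodes (rL r). \<forall>l. nlab (rL r) v = Some l \<longrightarrow> simple (fst l)"
      and "\<forall>e\<in>edges (rL r). simple (fst (elab (rL r) e))"
      using \<open>cond_rule_schema r\<close> by (simp_all add: cond_rule_schema_def)
  qed fact+
  then show ?thesis
    using rule_vars_in_left[OF \<open>cond_rule_schema r\<close>] by (rule agree_on_subset)
qed

end
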